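(* Let $\theta_0\in\mathbb{R}$ and let $\hat\theta_u,\hat\theta_b$ be real random variables with finite second moments such that $\mathbb{E}[\hat\theta_u]=\theta_0$ and $\mathbb{E}[\hat\theta_b]=\theta_0+\mu$ for some (arbitrary) $\mu\in\mathbb{R}$. Write $\sigma^2_u=\mathrm{Var}(\hat\theta_u)$, $\sigma^2_b=\mathrm{Var}(\hat\theta_b)$, $\sigma_{bu}=\mathrm{Cov}(\hat\theta_b,\hat\theta_u)$, and assume $\sigma^2_u>0$ and $\sigma^2_u+\sigma^2_b-2\sigma_{bu}>0$. Suppose the variances and covariance are known, and define $$\hat\lambda=\frac{\sigma^2_u-\sigma_{bu}}{(\hat\theta_u-\hat\theta_b)^2+\sigma^2_u+\sigma^2_b-2\sigma_{bu}},\qquad \hat\theta_{\hat\lambda}=\hat\lambda\hat\theta_b+(1-\hat\lambda)\hat\theta_u.$$ Let $c=\sigma_b/\sigma_u$ and $\rho=\sigma_{bu}/\sqrt{\sigma^2_u\sigma^2_b}$, with $\rho=0$ if $\sigma^2_b=0$. Then $$\mathbb{E}\big[(\hat\theta_{\hat\lambda}-\theta_0)^2\big]\le \sigma^2_u\left(1+\frac12\,\frac{|1-\rho c|}{\sqrt{1-2\rho c+c^2}}\right)^2 .$$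
   Context: $\hat\theta_u$ is an unbiased estimator of $\theta_0$ and $\hat\theta_b$ is a possibly biased estimator with unknown bias $\mu$; $\hat\theta_{\hat\lambda}$ is the combination estimator. $\sigma_u,\sigma_b$ denote the nonnegative square roots of $\sigma^2_u,\sigma^2_b$. *)

theory Defs
  imports "HOL-Probability.Probability"
begin

definition (in prob_space) covariance :: "('a \<Rightarrow> real) \<Rightarrow> ('a \<Rightarrow> real) \<Rightarrow> real" where
  "covariance X Y = expectation (\<lambda>x. (X x - expectation X) * (Y x - expectation Y))"

end

theory Submission
  imports Defs
begin

text \<open>Write \<open>D = U - B\<close>, \<open>s = \<sigma>\<^sub>u\<^sup>2 - \<sigma>\<^sub>b\<^sub>u\<close> and \<open>v = \<sigma>\<^sub>u\<^sup>2 + \<sigma>\<^sub>b\<^sup>2 - 2\<sigma>\<^sub>b\<^sub>u\<close>.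
  The estimation error is \<open>(U - \<theta>\<^sub>0) - s D / (D\<^sup>2 + v)\<close>, and by AM-GM the correction
  \<open>s D / (D\<^sup>2 + v)\<close> is bounded by \<open>K = |s| / (2 \<surd>v)\<close> uniformly in \<open>D\<close>. A perturbation
  bounded by \<open>K\<close> raises the root mean square error from \<open>\<sigma>\<^sub>u\<close> to at most \<open>\<sigma>\<^sub>u + K\<close>,
  and \<open>(\<sigma>\<^sub>u + K)\<^sup>2\<close> is the claimed bound written in terms of \<open>c\<close> and \<open>\<rho>\<close>.\<close>

lemma abs_divide_power2_add_mult_le:
  fixes s D v :: real
  assumes "v > 0"
  shows "\<bar>s / (D\<^sup>2 + v) * D\<bar> \<le> \<bar>s\<bar> / (2 * sqrt v)"
proof -
  have "0 \<le> (\<bar>D\<bar> - sqrt v)\<^sup>2" by simp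
  then have am_gm: "2 * sqrt v * \<bar>D\<bar> \<le> D\<^sup>2 + v"
    using assms by (simp add: power2_eq_square algebra_simps)
  have pos: "D\<^sup>2 + v > 0" using assms by (simp add: add_nonneg_pos)
  have "\<bar>s / (D\<^sup>2 + v) * D\<bar> = \<bar>s\<bar> * \<bar>D\<bar> / (D\<^sup>2 + v)"
    using pos by (simp add: abs_mult)
  also have "\<dots> \<le> \<bar>s\<bar> / (2 * sqrt v)"
    using pos assms am_gm
    by (simp add: divide_simps) (metis abs_ge_zero mult.assoc mult.commute mult_left_mono)
  finally show ?thesis .
qed

text \<open>The cross term \<open>2K|X|\<close> is split by AM-GM, so that taking expectations needs
  only \<open>E X\<^sup>2\<close> and not \<open>E |X|\<close>.\<close>

lemma power2_diff_le_of_abs_le: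
  fixes X Y K \<sigma> :: real
  assumes "\<sigma> > 0" and "\<bar>Y\<bar> \<le> K"
  shows "(X - Y)\<^sup>2 \<le> (1 + K / \<sigma>) * X\<^sup>2 + K * \<sigma> + K\<^sup>2"
proof -
  have "\<bar>X - Y\<bar> \<le> \<bar>X\<bar> + K" using assms by linarith
  then have "(X - Y)\<^sup>2 \<le> (\<bar>X\<bar> + K)\<^sup>2"
    by (metis abs_ge_zero power2_abs power_mono)
  also have "\<dots> = X\<^sup>2 + K * (2 * \<bar>X\<bar>) + K\<^sup>2"
    by (simp add: power2_eq_square algebra_simps)
  also have "\<dots> \<le> X\<^sup>2 + K * (X\<^sup>2 / \<sigma> + \<sigma>) + K\<^sup>2"
  proof -
    have "0 \<le> (\<bar>X\<bar> - \<sigma>)\<^sup>2" by simp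
    then have "2 * \<bar>X\<bar> \<le> X\<^sup>2 / \<sigma> + \<sigma>"
      using assms by (simp add: field_simps power2_eq_square)
    moreover have "K \<ge> 0" using assms by linarith
    ultimately show ?thesis by (simp add: mult_left_mono)
  qed
  also have "\<dots> = (1 + K / \<sigma>) * X\<^sup>2 + K * \<sigma> + K\<^sup>2"
    using assms by (simp add: field_simps)
  finally show ?thesis .
qed

lemma (in prob_space) expectation_power2_diff_le:
  fixes X Y :: "'a \<Rightarrow> real"
  assumes "integrable M (\<lambda>x. (X x)\<^sup>2)" and "expectation (\<lambda>x. (X x)\<^sup>2) \<le> \<sigma>\<^sup>2"
    and "\<sigma> > 0" and "\<And>x. x \<in> space M \<Longrightarrow> \<bar>Y x\<bar> \<le> K"
  shows "expectation (\<lambda>x. (X x - Y x)\<^sup>2) \<le> (\<sigma> + K)\<^sup>2"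
proof -
  have "K \<ge> 0"
    using assms(4) not_empty by (metis abs_ge_zero all_not_in_conv order_trans)
  have "expectation (\<lambda>x. (X x - Y x)\<^sup>2)
      \<le> expectation (\<lambda>x. (1 + K / \<sigma>) * (X x)\<^sup>2 + K * \<sigma> + K\<^sup>2)"
    using assms \<open>K \<ge> 0\<close>
    by (intro integral_mono' power2_diff_le_of_abs_le) (auto intro!: add_nonneg_nonneg)
  also have "\<dots> = (1 + K / \<sigma>) * expectation (\<lambda>x. (X x)\<^sup>2) + K * \<sigma> + K\<^sup>2"
    using assms(1) prob_space by simp
  also have "\<dots> \<le> (1 + K / \<sigma>) * \<sigma>\<^sup>2 + K * \<sigma> + K\<^sup>2"
    using assms(2,3) \<open>K \<ge> 0\<close> by (simp add: mult_left_mono)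
  also have "\<dots> = (\<sigma> + K)\<^sup>2"
    using assms(3) by (simp add: power2_eq_square field_simps)
  finally show ?thesis .
qed

lemma (in prob_space) expectation_shrinkage_error_le:
  fixes U B :: "'a \<Rightarrow> real"
  assumes "integrable M (\<lambda>x. (U x - \<theta>)\<^sup>2)" and "expectation (\<lambda>x. (U x - \<theta>)\<^sup>2) \<le> \<sigma>\<^sup>2"
    and "\<sigma> > 0" and "v > 0"
  shows "expectation (\<lambda>x. (s / ((U x - B x)\<^sup>2 + v) * B x
      + (1 - s / ((U x - B x)\<^sup>2 + v)) * U x - \<theta>)\<^sup>2) \<le> (\<sigma> + \<bar>s\<bar> / (2 * sqrt v))\<^sup>2"
proof -
  have "L * b + (1 - L) * u - \<theta> = (u - \<theta>) - L * (u - b)" for L b u :: real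
    by algebra
  moreover have "\<bar>s / ((U x - B x)\<^sup>2 + v) * (U x - B x)\<bar> \<le> \<bar>s\<bar> / (2 * sqrt v)" for x
    using assms(4) by (rule abs_divide_power2_add_mult_le)
  ultimately show ?thesis
    using assms(1-3) by (simp only:) (rule expectation_power2_diff_le)
qed

lemma (in prob_space) covariance_eq_0_of_variance_eq_0:
  fixes X Y :: "'a \<Rightarrow> real"
  assumes [measurable]: "X \<in> borel_measurable M"
    and "integrable M (\<lambda>x. (X x)\<^sup>2)" and "variance X = 0"
  shows "covariance X Y = 0"
proof -
  have "integrable M X"
    using assms(1,2) by (rule square_integrable_imp_integrable)
  then have "integrable M (\<lambda>x. (X x - expectation X)\<^sup>2)"
    using assms(2) by (simp add: power2_diff)
  then have "AE x in M. (X x - expectation X)\<^sup>2 = 0"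
    using assms(3) by (subst (asm) integral_nonneg_eq_0_iff_AE) auto
  then have "AE x in M. (X x - expectation X) * (Y x - expectation Y) = 0"
    by eventually_elim simp
  then show ?thesis
    unfolding covariance_def by (rule integral_eq_zero_AE)
qed

lemma power2_one_add_correlation_term_eq:
  fixes su2 sb2 sbu :: real
  assumes "su2 > 0" and "sb2 \<ge> 0" and "su2 + sb2 - 2 * sbu > 0"
    and "sb2 = 0 \<Longrightarrow> sbu = 0"
  defines "c \<equiv> sqrt sb2 / sqrt su2"
    and "\<rho> \<equiv> if sb2 = 0 then 0 else sbu / sqrt (su2 * sb2)"
  shows "su2 * (1 + (1/2) * \<bar>1 - \<rho> * c\<bar> / sqrt (1 - 2 * \<rho> * c + c\<^sup>2))\<^sup>2
    = (sqrt su2 + \<bar>su2 - sbu\<bar> / (2 * sqrt (su2 + sb2 - 2 * sbu)))\<^sup>2"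
proof -
  define v where "v = su2 + sb2 - 2 * sbu"
  have "\<rho> * c = sbu / su2"
  proof (cases "sb2 = 0")
    case False
    then have "sqrt sb2 > 0" using assms(2) by simp
    then show ?thesis
      using assms(1) False by (simp add: \<rho>_def c_def real_sqrt_mult field_simps)
  qed (simp add: assms(4) \<rho>_def)
  moreover have "c\<^sup>2 = sb2 / su2"
    using assms(1,2) by (simp add: c_def power_divide)
  ultimately have "1 - \<rho> * c = (su2 - sbu) / su2" and "1 - 2 * \<rho> * c + c\<^sup>2 = v / su2"
    using assms(1) by (simp_all add: v_def field_simps)
  then have "(1/2) * \<bar>1 - \<rho> * c\<bar> / sqrt (1 - 2 * \<rho> * c + c\<^sup>2)
      = (1/2) * (\<bar>su2 - sbu\<bar> / su2) / (sqrt v / sqrt su2)"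
    using assms(1) by (simp add: abs_div real_sqrt_divide)
  also have "\<dots> = \<bar>su2 - sbu\<bar> / (2 * sqrt v) * (sqrt su2 / su2)"
    by simp
  also have "\<dots> = \<bar>su2 - sbu\<bar> / (2 * sqrt v) / sqrt su2"
  proof -
    have "sqrt su2 / su2 = 1 / sqrt su2"
      using assms(1) by (simp add: field_simps)
    then show ?thesis by simp
  qed
  finally have "su2 * (1 + (1/2) * \<bar>1 - \<rho> * c\<bar> / sqrt (1 - 2 * \<rho> * c + c\<^sup>2))\<^sup>2
      = (sqrt su2 * (1 + \<bar>su2 - sbu\<bar> / (2 * sqrt v) / sqrt su2))\<^sup>2"
    using assms(1) by (simp add: power_mult_distrib)
  also have "\<dots> = (sqrt su2 + \<bar>su2 - sbu\<bar> / (2 * sqrt v))\<^sup>2"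
    using assms(1) by (simp add: distrib_left)
  finally show ?thesis
    unfolding v_def .
qed

theorem theorem2:
  fixes M :: "'a measure" and U B :: "'a \<Rightarrow> real" and \<theta>0 \<mu> :: real
  assumes "prob_space M"
    and "U \<in> borel_measurable M" and "B \<in> borel_measurable M"
    and "integrable M (\<lambda>x. (U x)\<^sup>2)" and "integrable M (\<lambda>x. (B x)\<^sup>2)"
    and "prob_space.expectation M U = \<theta>0"
    and "prob_space.expectation M B = \<theta>0 + \<mu>"
    and "prob_space.variance M U > 0"
    and "prob_space.variance M U + prob_space.variance M B
           - 2 * prob_space.covariance M B U > 0"
  shows
   "let su2 = prob_space.variance M U; sb2 = prob_space.variance M B;
        sbu = prob_space.covariance M B U;
        lam = (\<lambda>x. (su2 - sbu) / ((U x - B x)\<^sup>2 + su2 + sb2 - 2 * sbu));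
        est = (\<lambda>x. lam x * B x + (1 - lam x) * U x);
        c = sqrt sb2 / sqrt su2;
        \<rho> = (if sb2 = 0 then 0 else sbu / sqrt (su2 * sb2))
    in prob_space.expectation M (\<lambda>x. (est x - \<theta>0)\<^sup>2)
       \<le> su2 * (1 + (1/2) * \<bar>1 - \<rho> * c\<bar> / sqrt (1 - 2 * \<rho> * c + c\<^sup>2))\<^sup>2"
proof -
  interpret prob_space M by fact
  define su2 where "su2 = variance U"
  define sb2 where "sb2 = variance B"
  define sbu where "sbu = covariance B U"
  define v where "v = su2 + sb2 - 2 * sbu"
  have "su2 > 0" and "su2 + sb2 - 2 * sbu > 0"
    using assms(8,9) by (simp_all add: su2_def sb2_def sbu_def)
  have "integrable M U"
    using assms(2,4) by (rule square_integrable_imp_integrable)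
  then have "integrable M (\<lambda>x. (U x - \<theta>0)\<^sup>2)"
    using assms(4) by (simp add: power2_diff)
  moreover have "expectation (\<lambda>x. (U x - \<theta>0)\<^sup>2) \<le> (sqrt su2)\<^sup>2"
    using assms(6) \<open>su2 > 0\<close> by (simp add: su2_def)
  ultimately have risk_le: "expectation (\<lambda>x. ((su2 - sbu) / ((U x - B x)\<^sup>2 + v) * B x
      + (1 - (su2 - sbu) / ((U x - B x)\<^sup>2 + v)) * U x - \<theta>0)\<^sup>2)
      \<le> (sqrt su2 + \<bar>su2 - sbu\<bar> / (2 * sqrt v))\<^sup>2"
    using \<open>su2 > 0\<close> \<open>su2 + sb2 - 2 * sbu > 0\<close>
    by (intro expectation_shrinkage_error_le) (simp_all add: v_def)
  have "sb2 \<ge> 0"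
    unfolding sb2_def by (rule integral_nonneg_AE) simp
  have covariance_0: "sb2 = 0 \<Longrightarrow> sbu = 0"
    using assms(3,5) by (simp add: sb2_def sbu_def covariance_eq_0_of_variance_eq_0)
  have bound_eq: "su2 * (1 + (1/2) * \<bar>1 - (if sb2 = 0 then 0 else sbu / sqrt (su2 * sb2))
        * (sqrt sb2 / sqrt su2)\<bar> / sqrt (1 - 2 * (if sb2 = 0 then 0 else sbu / sqrt (su2 * sb2))
        * (sqrt sb2 / sqrt su2) + (sqrt sb2 / sqrt su2)\<^sup>2))\<^sup>2
      = (sqrt su2 + \<bar>su2 - sbu\<bar> / (2 * sqrt v))\<^sup>2"
    unfolding v_def using \<open>su2 > 0\<close> \<open>sb2 \<ge> 0\<close> \<open>su2 + sb2 - 2 * sbu > 0\<close> covariance_0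
    by (rule power2_one_add_correlation_term_eq)
  have denominator_eq: "(U x - B x)\<^sup>2 + su2 + sb2 - 2 * sbu = (U x - B x)\<^sup>2 + v" for x
    by (simp add: v_def)
  show ?thesis
    using risk_le
    unfolding Let_def su2_def[symmetric] sb2_def[symmetric] sbu_def[symmetric] denominator_eq bound_eq .
qed

end
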